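(* Let $P\subseteq\mathbb{R}^n$ be a closed convex set, $c:\mathbb{R}^n\to\mathbb{R}$, $A\in\mathbb{R}^{I\times n}$ with rows $A_{i\bullet}$, $\eta\in\mathbb{R}^I$, scalars $\psi_{ij}$ ($i=0,\dots,I$, $j=1,\dots,J_i$) with $\psi_{ij}^\pm=\max(\pm\psi_{ij},0)$, and continuous functions $\phi_{ij},\varphi_{ij}:\mathbb{R}^n\to\mathbb{R}$. Let $\bar x\in P$. Then there exists $\bar\varepsilon>0$ (depending on $\bar x$) such that for every $\varepsilon\in(0,\bar\varepsilon]$: (A) if $\bar x$ is a local maximizer of the M-HSCOP (maximize $\theta_{\rm MHS}$ over $X_{\rm MHS}$), then $\bar x$ is a local maximizer of $(\mathrm{P}^\varepsilon_{\rm MHS})$ (maximize $\theta^\varepsilon_{\rm MHS}$ over $X^\varepsilon_{\rm MHS}$); (B) if $\bar x$ satisfies the local sign-invariance condition below and $\bar x$ is a local maximizer of $(\mathrm{P}^\varepsilon_{\rm MHS})$, then $\bar x$ is a local maximizer of the M-HSCOP. Local sign-invariance condition: for all $i=0,1,\dots,I$, $\varphi_{ij}$ is nonpositive on a neighborhood of $\bar x$ for every $j\in\mathcal{J}^+_{i,0}(\bar x)$, and $\phi_{ij}$ is nonnegative on a neighborhood of $\bar x$ for every $j\in\mathcal{J}^-_{i,0}(\bar x)$.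
   Context: $\mathbf{1}_S$ is the indicator of $S\subseteq\mathbb{R}$. The M-HSCOP has objective $\theta_{\rm MHS}(x)=c(x)+\sum_{j=1}^{J_0}\psi_{0j}\mathbf{1}_{[0,\infty)}(\phi_{0j}(x))\mathbf{1}_{(0,\infty)}(\varphi_{0j}(x))$ and feasible set $X_{\rm MHS}=\{x\in P: A_{i\bullet}x+\sum_{j=1}^{J_i}\psi_{ij}\mathbf{1}_{[0,\infty)}(\phi_{ij}(x))\mathbf{1}_{(0,\infty)}(\varphi_{ij}(x))\ge\eta_i,\ i=1,\dots,I\}$. For $\varepsilon>0$, $(\mathrm{P}^\varepsilon_{\rm MHS})$ has objective $\theta^\varepsilon_{\rm MHS}(x)=c(x)+\sum_{j=1}^{J_0}\psi_{0j}^+\mathbf{1}_{[0,\infty)}(\phi_{0j}(x))\mathbf{1}_{[\varepsilon,\infty)}(\varphi_{0j}(x))-\sum_{j=1}^{J_0}\psi_{0j}^-\mathbf{1}_{(-\varepsilon,\infty)}(\phi_{0j}(x))\mathbf{1}_{(0,\infty)}(\varphi_{0j}(x))$ and feasible set $X^\varepsilon_{\rm MHS}=\{x\in P: A_{i\bullet}x+\sum_{j}\psi_{ij}^+\mathbf{1}_{[0,\infty)}(\phi_{ij}(x))\mathbf{1}_{[\varepsilon,\infty)}(\varphi_{ij}(x))-\sum_j\psi_{ij}^-\mathbf{1}_{(-\varepsilon,\infty)}(\phi_{ij}(x))\mathbf{1}_{(0,\infty)}(\varphi_{ij}(x))\ge\eta_i,\ i=1,\dots,I\}$. A local maximizer of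 $f$ on $X$ is $\bar x\in X$ with a neighborhood $\mathcal{N}$ such that $f(\bar x)\ge f(x)$ for all $x\in X\cap\mathcal{N}$. Index sets: $\mathcal{J}^+_{i,0}(\bar x)=\{j\in\{1,\dots,J_i\}:\psi_{ij}>0,\ \varphi_{ij}(\bar x)=0\}$ and $\mathcal{J}^-_{i,0}(\bar x)=\{j\in\{1,\dots,J_i\}:\psi_{ij}<0,\ \phi_{ij}(\bar x)=0\}$. *)

theory Defs
  imports "HOL-Analysis.Analysis"
begin

(* Row i of A is the vector A i (i = 1..I),
   inner product A i \<bullet> x. *)

definition pos_part :: "real \<Rightarrow> real" where "pos_part t = max t 0"
definition neg_part :: "real \<Rightarrow> real" where "neg_part t = max (- t) 0"

definition theta_MHS ::
  "(real^'n \<Rightarrow> real) \<Rightarrow> (nat \<Rightarrow> nat) \<Rightarrow> (nat \<Rightarrow> nat \<Rightarrow> real)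
   \<Rightarrow> (nat \<Rightarrow> nat \<Rightarrow> real^'n \<Rightarrow> real) \<Rightarrow> (nat \<Rightarrow> nat \<Rightarrow> real^'n \<Rightarrow> real) \<Rightarrow> real^'n \<Rightarrow> real"
  where "theta_MHS c J psi phi vphi x = c x +
     (\<Sum>j=1..J 0. psi 0 j * indicator {0..} (phi 0 j x) * indicator {0<..} (vphi 0 j x))"

definition X_MHS ::
  "(real^'n) set \<Rightarrow> nat \<Rightarrow> (nat \<Rightarrow> real^'n) \<Rightarrow> (nat \<Rightarrow> real) \<Rightarrow> (nat \<Rightarrow> nat) \<Rightarrow> (nat \<Rightarrow> nat \<Rightarrow> real)
   \<Rightarrow> (nat \<Rightarrow> nat \<Rightarrow> real^'n \<Rightarrow> real) \<Rightarrow> (nat \<Rightarrow> nat \<Rightarrow> real^'n \<Rightarrow> real) \<Rightarrow> (real^'n) set"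
  where "X_MHS P I A eta J psi phi vphi = {x \<in> P. \<forall>i\<in>{1..I}.
     A i \<bullet> x + (\<Sum>j=1..J i. psi i j * indicator {0..} (phi i j x) * indicator {0<..} (vphi i j x))
       \<ge> eta i}"

definition theta_MHS_eps ::
  "real \<Rightarrow> (real^'n \<Rightarrow> real) \<Rightarrow> (nat \<Rightarrow> nat) \<Rightarrow> (nat \<Rightarrow> nat \<Rightarrow> real)
   \<Rightarrow> (nat \<Rightarrow> nat \<Rightarrow> real^'n \<Rightarrow> real) \<Rightarrow> (nat \<Rightarrow> nat \<Rightarrow> real^'n \<Rightarrow> real) \<Rightarrow> real^'n \<Rightarrow> real"
  where "theta_MHS_eps \<epsilon> c J psi phi vphi x = c x
     + (\<Sum>j=1..J 0. pos_part (psi 0 j) * indicator {0..} (phi 0 j x) * indicator {\<epsilon>..} (vphi 0 j x))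
     - (\<Sum>j=1..J 0. neg_part (psi 0 j) * indicator {-\<epsilon><..} (phi 0 j x) * indicator {0<..} (vphi 0 j x))"

definition X_MHS_eps ::
  "real \<Rightarrow> (real^'n) set \<Rightarrow> nat \<Rightarrow> (nat \<Rightarrow> real^'n) \<Rightarrow> (nat \<Rightarrow> real) \<Rightarrow> (nat \<Rightarrow> nat) \<Rightarrow> (nat \<Rightarrow> nat \<Rightarrow> real)
   \<Rightarrow> (nat \<Rightarrow> nat \<Rightarrow> real^'n \<Rightarrow> real) \<Rightarrow> (nat \<Rightarrow> nat \<Rightarrow> real^'n \<Rightarrow> real) \<Rightarrow> (real^'n) set"
  where "X_MHS_eps \<epsilon> P I A eta J psi phi vphi = {x \<in> P. \<forall>i\<in>{1..I}.
     A i \<bullet> x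
     + (\<Sum>j=1..J i. pos_part (psi i j) * indicator {0..} (phi i j x) * indicator {\<epsilon>..} (vphi i j x))
     - (\<Sum>j=1..J i. neg_part (psi i j) * indicator {-\<epsilon><..} (phi i j x) * indicator {0<..} (vphi i j x))
       \<ge> eta i}"

definition local_maximizer :: "('a::topological_space \<Rightarrow> real) \<Rightarrow> 'a set \<Rightarrow> 'a \<Rightarrow> bool" where
  "local_maximizer f X xb \<longleftrightarrow> xb \<in> X \<and>
     (\<exists>N. open N \<and> xb \<in> N \<and> (\<forall>x\<in>X \<inter> N. f xb \<ge> f x))"

definition J_plus0 :: "(nat \<Rightarrow> nat) \<Rightarrow> (nat \<Rightarrow> nat \<Rightarrow> real) \<Rightarrow> (nat \<Rightarrow> nat \<Rightarrow> 'a \<Rightarrow> real) \<Rightarrow> nat \<Rightarrow> 'a \<Rightarrow> nat set"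
  where "J_plus0 J psi vphi i xb = {j \<in> {1..J i}. psi i j > 0 \<and> vphi i j xb = 0}"

definition J_minus0 :: "(nat \<Rightarrow> nat) \<Rightarrow> (nat \<Rightarrow> nat \<Rightarrow> real) \<Rightarrow> (nat \<Rightarrow> nat \<Rightarrow> 'a \<Rightarrow> real) \<Rightarrow> nat \<Rightarrow> 'a \<Rightarrow> nat set"
  where "J_minus0 J psi phi i xb = {j \<in> {1..J i}. psi i j < 0 \<and> phi i j xb = 0}"

definition local_sign_invariance ::
  "nat \<Rightarrow> (nat \<Rightarrow> nat) \<Rightarrow> (nat \<Rightarrow> nat \<Rightarrow> real) \<Rightarrow> (nat \<Rightarrow> nat \<Rightarrow> 'a::topological_space \<Rightarrow> real)
   \<Rightarrow> (nat \<Rightarrow> nat \<Rightarrow> 'a \<Rightarrow> real) \<Rightarrow> 'a \<Rightarrow> bool" where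
  "local_sign_invariance I J psi phi vphi xb \<longleftrightarrow> (\<forall>i\<in>{0..I}.
     (\<forall>j\<in>J_plus0 J psi vphi i xb. \<exists>N. open N \<and> xb \<in> N \<and> (\<forall>x\<in>N. vphi i j x \<le> 0)) \<and>
     (\<forall>j\<in>J_minus0 J psi phi i xb. \<exists>N. open N \<and> xb \<in> N \<and> (\<forall>x\<in>N. phi i j x \<ge> 0)))"

end

theory Submission
  imports Defs
begin

text \<open>
  Each smoothed Heaviside term lies below the original one (the positive terms switch on only
  once \<open>\<varphi> \<ge> \<epsilon>\<close>, the negative ones already once \<open>\<phi> > -\<epsilon>\<close>), and at a fixed point it coincides
  with it as soon as \<open>\<epsilon>\<close> is smaller than the distance of the relevant argument from \<open>0\<close>.
  Hence \<open>X\<^sup>\<epsilon> \<subseteq> X\<close> and \<open>\<theta>\<^sup>\<epsilon> \<le> \<theta>\<close>, with equality at \<open>x\<close>, which gives (A). Under local sign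
  invariance, an argument vanishing at \<open>x\<close> keeps near \<open>x\<close> the sign on which both terms agree,
  while continuity keeps the other arguments away from \<open>0\<close>; so for small \<open>\<epsilon>\<close> both problems
  coincide on a neighbourhood of \<open>x\<close>, which gives (B).
\<close>

lemma local_maximizer_minorant:
  assumes "local_maximizer f X xb" "Y \<subseteq> X" "xb \<in> Y"
    and "\<And>x. x \<in> Y \<Longrightarrow> g x \<le> f x" "g xb = f xb"
  shows "local_maximizer g Y xb"
  using assms unfolding local_maximizer_def by (metis IntD1 IntD2 IntI order.trans subsetD)

lemma local_maximizer_nhds_cong:
  assumes "local_maximizer g Y xb"
    and "\<forall>\<^sub>F x in nhds xb. g x = f x \<and> (x \<in> Y \<longleftrightarrow> x \<in> X)"
  shows "local_maximizer f X xb"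
proof -
  obtain N where N: "open N" "xb \<in> N" "\<forall>x\<in>Y \<inter> N. g xb \<ge> g x" and "xb \<in> Y"
    using assms(1) unfolding local_maximizer_def by blast
  obtain M where M: "open M" "xb \<in> M" "\<forall>x\<in>M. g x = f x \<and> (x \<in> Y \<longleftrightarrow> x \<in> X)"
    using assms(2) unfolding eventually_nhds by blast
  have "f xb \<ge> f x" if "x \<in> X \<inter> (N \<inter> M)" for x
    using N(3) M(2,3) that by force
  moreover have "xb \<in> X" using M(2,3) \<open>xb \<in> Y\<close> by blast
  ultimately show ?thesis
    unfolding local_maximizer_def using N(1,2) M(1,2) by (intro conjI exI[of _ "N \<inter> M"]) auto
qed

lemma eventually_at_right_0_bound:
  assumes "\<forall>\<^sub>F \<epsilon> in at_right (0::real). Q \<epsilon>"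
  shows "\<exists>\<epsilon>b>0. \<forall>\<epsilon>. 0 < \<epsilon> \<and> \<epsilon> \<le> \<epsilon>b \<longrightarrow> Q \<epsilon>"
proof -
  obtain b :: real where "b > 0" "\<forall>\<epsilon>>0. \<epsilon> < b \<longrightarrow> Q \<epsilon>"
    using assms unfolding eventually_at_right_field by blast
  then show ?thesis by (intro exI[of _ "b / 2"]) auto
qed

definition hs_term :: "real \<Rightarrow> real \<Rightarrow> real \<Rightarrow> real" where
  "hs_term p a b = p * indicator {0..} a * indicator {0<..} b"

definition hs_term_eps :: "real \<Rightarrow> real \<Rightarrow> real \<Rightarrow> real \<Rightarrow> real" where
  "hs_term_eps \<epsilon> p a b = pos_part p * indicator {0..} a * indicator {\<epsilon>..} b
     - neg_part p * indicator {-\<epsilon><..} a * indicator {0<..} b"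

lemma hs_term_eps_le: "0 < \<epsilon> \<Longrightarrow> hs_term_eps \<epsilon> p a b \<le> hs_term p a b"
  by (auto simp: hs_term_eps_def hs_term_def pos_part_def neg_part_def split: split_indicator)

lemma hs_term_eps_eq:
  assumes "0 < \<epsilon>" "p > 0 \<Longrightarrow> b \<le> 0 \<or> \<epsilon> \<le> b" "p < 0 \<Longrightarrow> 0 \<le> a \<or> a \<le> -\<epsilon>"
  shows "hs_term_eps \<epsilon> p a b = hs_term p a b"
  using assms
  by (cases p "0::real" rule: linorder_cases)
    (auto simp: hs_term_eps_def hs_term_def pos_part_def neg_part_def split: split_indicator)

lemma eventually_nonpos_or_ge:
  fixes b :: real
  shows "\<forall>\<^sub>F \<epsilon> in at_right 0. b \<le> 0 \<or> \<epsilon> \<le> b"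
proof (cases "b \<le> 0")
  case False
  then show ?thesis
    using eventually_at_right_real[of 0 b] by (auto elim: eventually_mono)
qed simp

lemma eventually_nonpos_or_ge_nhds:
  fixes g :: "'a::t2_space \<Rightarrow> real"
  assumes "isCont g xb" and "g xb = 0 \<Longrightarrow> \<forall>\<^sub>F x in nhds xb. g x \<le> 0"
  shows "\<forall>\<^sub>F \<epsilon> in at_right 0. \<forall>\<^sub>F x in nhds xb. g x \<le> 0 \<or> \<epsilon> \<le> g x"
proof -
  have g: "(g \<longlongrightarrow> g xb) (nhds xb)"
    using assms(1) by (simp add: isCont_def tendsto_at_iff_tendsto_nhds)
  consider "g xb < 0" | "g xb = 0" | "g xb > 0" by linarith
  then show ?thesis
  proof cases
    case 1
    then have "\<forall>\<^sub>F x in nhds xb. g x < 0" using order_tendstoD(2)[OF g] by blast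
    then have "\<forall>\<epsilon>. \<forall>\<^sub>F x in nhds xb. g x \<le> 0 \<or> \<epsilon> \<le> g x"
      by (auto elim: eventually_mono)
    then show ?thesis by (rule always_eventually)
  next
    case 2
    then show ?thesis using assms(2) by (intro always_eventually) (auto elim: eventually_mono)
  next
    case 3
    then have near: "\<forall>\<^sub>F x in nhds xb. g xb / 2 < g x" using order_tendstoD(1)[OF g, of "g xb / 2"] by simp
    have "\<forall>\<^sub>F \<epsilon> in at_right 0. \<epsilon> < g xb / 2"
      using eventually_at_right_real[of 0 "g xb / 2"] 3 by (auto elim: eventually_mono)
    then show ?thesis
      by (rule eventually_mono) (use near in \<open>auto elim: eventually_mono\<close>)
  qed
qed

lemma eventually_hs_term_eps_eq: "\<forall>\<^sub>F \<epsilon> in at_right 0. hs_term_eps \<epsilon> p a b = hs_term p a b"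
  using eventually_at_right_less[of 0] eventually_nonpos_or_ge[of b] eventually_nonpos_or_ge[of "-a"]
  by eventually_elim (auto intro: hs_term_eps_eq)

lemma eventually_hs_term_eps_eq_nhds:
  fixes f g :: "'a::t2_space \<Rightarrow> real"
  assumes "isCont f xb" "isCont g xb"
    and "p > 0 \<Longrightarrow> g xb = 0 \<Longrightarrow> \<forall>\<^sub>F x in nhds xb. g x \<le> 0"
    and "p < 0 \<Longrightarrow> f xb = 0 \<Longrightarrow> \<forall>\<^sub>F x in nhds xb. f x \<ge> 0"
  shows "\<forall>\<^sub>F \<epsilon> in at_right 0. \<forall>\<^sub>F x in nhds xb. hs_term_eps \<epsilon> p (f x) (g x) = hs_term p (f x) (g x)"
proof -
  have g: "\<forall>\<^sub>F \<epsilon> in at_right 0. \<forall>\<^sub>F x in nhds xb. p > 0 \<longrightarrow> g x \<le> 0 \<or> \<epsilon> \<le> g x"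
  proof (cases "p > 0")
    case True
    then show ?thesis
      using eventually_nonpos_or_ge_nhds[OF assms(2)] assms(3) by simp
  qed simp
  have f: "\<forall>\<^sub>F \<epsilon> in at_right 0. \<forall>\<^sub>F x in nhds xb. p < 0 \<longrightarrow> - f x \<le> 0 \<or> \<epsilon> \<le> - f x"
  proof (cases "p < 0")
    case True
    then show ?thesis
      using eventually_nonpos_or_ge_nhds[where g = "\<lambda>x. - f x"] assms(1,4) by simp
  qed simp
  show ?thesis
    using eventually_at_right_less[of 0] f g
  proof eventually_elim
    case (elim \<epsilon>)
    from elim(2,3) show ?case
      by eventually_elim (use elim(1) in \<open>auto intro: hs_term_eps_eq\<close>)
  qed
qed

definition hs_sum ::
  "(nat \<Rightarrow> nat) \<Rightarrow> (nat \<Rightarrow> nat \<Rightarrow> real) \<Rightarrow> (nat \<Rightarrow> nat \<Rightarrow> 'a \<Rightarrow> real) \<Rightarrow> (nat \<Rightarrow> nat \<Rightarrow> 'a \<Rightarrow> real)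
   \<Rightarrow> nat \<Rightarrow> 'a \<Rightarrow> real" where
  "hs_sum J psi phi vphi i x = (\<Sum>j=1..J i. hs_term (psi i j) (phi i j x) (vphi i j x))"

definition hs_sum_eps ::
  "real \<Rightarrow> (nat \<Rightarrow> nat) \<Rightarrow> (nat \<Rightarrow> nat \<Rightarrow> real) \<Rightarrow> (nat \<Rightarrow> nat \<Rightarrow> 'a \<Rightarrow> real)
   \<Rightarrow> (nat \<Rightarrow> nat \<Rightarrow> 'a \<Rightarrow> real) \<Rightarrow> nat \<Rightarrow> 'a \<Rightarrow> real" where
  "hs_sum_eps \<epsilon> J psi phi vphi i x = (\<Sum>j=1..J i. hs_term_eps \<epsilon> (psi i j) (phi i j x) (vphi i j x))"

lemma theta_MHS_hs_sum: "theta_MHS c J psi phi vphi x = c x + hs_sum J psi phi vphi 0 x"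
  by (simp add: theta_MHS_def hs_sum_def hs_term_def)

lemma theta_MHS_eps_hs_sum_eps:
  "theta_MHS_eps \<epsilon> c J psi phi vphi x = c x + hs_sum_eps \<epsilon> J psi phi vphi 0 x"
  by (simp add: theta_MHS_eps_def hs_sum_eps_def hs_term_eps_def sum_subtractf)

lemma X_MHS_hs_sum: "X_MHS P I A eta J psi phi vphi =
    {x \<in> P. \<forall>i\<in>{1..I}. eta i \<le> A i \<bullet> x + hs_sum J psi phi vphi i x}"
  by (simp add: X_MHS_def hs_sum_def hs_term_def)

lemma X_MHS_eps_hs_sum_eps: "X_MHS_eps \<epsilon> P I A eta J psi phi vphi =
    {x \<in> P. \<forall>i\<in>{1..I}. eta i \<le> A i \<bullet> x + hs_sum_eps \<epsilon> J psi phi vphi i x}"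
  by (simp add: X_MHS_eps_def hs_sum_eps_def hs_term_eps_def sum_subtractf algebra_simps)

lemma hs_sum_eps_le: "0 < \<epsilon> \<Longrightarrow> hs_sum_eps \<epsilon> J psi phi vphi i x \<le> hs_sum J psi phi vphi i x"
  unfolding hs_sum_eps_def hs_sum_def by (intro sum_mono hs_term_eps_le)

lemma theta_MHS_eps_le: "0 < \<epsilon> \<Longrightarrow> theta_MHS_eps \<epsilon> c J psi phi vphi x \<le> theta_MHS c J psi phi vphi x"
  using hs_sum_eps_le by (simp add: theta_MHS_hs_sum theta_MHS_eps_hs_sum_eps)

lemma X_MHS_eps_subset: "0 < \<epsilon> \<Longrightarrow> X_MHS_eps \<epsilon> P I A eta J psi phi vphi \<subseteq> X_MHS P I A eta J psi phi vphi"
  unfolding X_MHS_hs_sum X_MHS_eps_hs_sum_eps using hs_sum_eps_le by (fastforce intro: order.trans)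

lemma MHS_eps_eq_MHS_if_hs_sums_eq:
  assumes "\<forall>i\<le>I. hs_sum_eps \<epsilon> J psi phi vphi i x = hs_sum J psi phi vphi i x"
  shows "theta_MHS_eps \<epsilon> c J psi phi vphi x = theta_MHS c J psi phi vphi x"
    and "x \<in> X_MHS_eps \<epsilon> P I A eta J psi phi vphi \<longleftrightarrow> x \<in> X_MHS P I A eta J psi phi vphi"
  using assms by (auto simp: theta_MHS_hs_sum theta_MHS_eps_hs_sum_eps X_MHS_hs_sum X_MHS_eps_hs_sum_eps)

lemma local_maximizer_MHS_eps_if_hs_sums_eq:
  assumes "0 < \<epsilon>" and "\<forall>i\<le>I. hs_sum_eps \<epsilon> J psi phi vphi i xb = hs_sum J psi phi vphi i xb"
    and "local_maximizer (theta_MHS c J psi phi vphi) (X_MHS P I A eta J psi phi vphi) xb"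
  shows "local_maximizer (theta_MHS_eps \<epsilon> c J psi phi vphi) (X_MHS_eps \<epsilon> P I A eta J psi phi vphi) xb"
proof (rule local_maximizer_minorant[OF assms(3) X_MHS_eps_subset[OF assms(1)]])
  show "xb \<in> X_MHS_eps \<epsilon> P I A eta J psi phi vphi"
    using assms(3) MHS_eps_eq_MHS_if_hs_sums_eq(2)[OF assms(2)] by (simp add: local_maximizer_def)
qed (use assms(1) theta_MHS_eps_le MHS_eps_eq_MHS_if_hs_sums_eq(1)[OF assms(2)] in auto)

lemma local_maximizer_MHS_if_hs_sums_eq_nhds:
  assumes "\<forall>\<^sub>F x in nhds xb. \<forall>i\<le>I. hs_sum_eps \<epsilon> J psi phi vphi i x = hs_sum J psi phi vphi i x"
    and "local_maximizer (theta_MHS_eps \<epsilon> c J psi phi vphi) (X_MHS_eps \<epsilon> P I A eta J psi phi vphi) xb"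
  shows "local_maximizer (theta_MHS c J psi phi vphi) (X_MHS P I A eta J psi phi vphi) xb"
  using assms(2)
proof (rule local_maximizer_nhds_cong)
  show "\<forall>\<^sub>F x in nhds xb. theta_MHS_eps \<epsilon> c J psi phi vphi x = theta_MHS c J psi phi vphi x \<and>
      (x \<in> X_MHS_eps \<epsilon> P I A eta J psi phi vphi \<longleftrightarrow> x \<in> X_MHS P I A eta J psi phi vphi)"
    using assms(1) by eventually_elim (simp add: MHS_eps_eq_MHS_if_hs_sums_eq)
qed

lemma eventually_hs_sums_eps_eq:
  "\<forall>\<^sub>F \<epsilon> in at_right 0. \<forall>i\<le>I. hs_sum_eps \<epsilon> J psi phi vphi i x = hs_sum J psi phi vphi i x"
proof -
  have "\<forall>\<^sub>F \<epsilon> in at_right 0. \<forall>(i, j)\<in>Sigma {..I} (\<lambda>i. {1..J i}).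
          hs_term_eps \<epsilon> (psi i j) (phi i j x) (vphi i j x) = hs_term (psi i j) (phi i j x) (vphi i j x)"
    by (intro eventually_ball_finite) (auto intro: eventually_hs_term_eps_eq)
  then show ?thesis
    unfolding hs_sum_eps_def hs_sum_def by eventually_elim (auto intro: sum.cong)
qed

lemma eventually_hs_sums_eps_eq_nhds:
  fixes phi vphi :: "nat \<Rightarrow> nat \<Rightarrow> 'a::t2_space \<Rightarrow> real"
  assumes "\<And>i j. i \<le> I \<Longrightarrow> j \<in> {1..J i} \<Longrightarrow> isCont (phi i j) xb"
    and "\<And>i j. i \<le> I \<Longrightarrow> j \<in> {1..J i} \<Longrightarrow> isCont (vphi i j) xb"
    and "local_sign_invariance I J psi phi vphi xb"
  shows "\<forall>\<^sub>F \<epsilon> in at_right 0. \<forall>\<^sub>F x in nhds xb.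
           \<forall>i\<le>I. hs_sum_eps \<epsilon> J psi phi vphi i x = hs_sum J psi phi vphi i x"
proof -
  let ?K = "Sigma {..I} (\<lambda>i. {1..J i})"
  let ?eq = "\<lambda>\<epsilon> x (i, j). hs_term_eps \<epsilon> (psi i j) (phi i j x) (vphi i j x)
                            = hs_term (psi i j) (phi i j x) (vphi i j x)"
  have "\<forall>\<^sub>F \<epsilon> in at_right 0. \<forall>\<^sub>F x in nhds xb. ?eq \<epsilon> x k" if "k \<in> ?K" for k
  proof -
    obtain i j where k: "k = (i, j)" "i \<le> I" "j \<in> {1..J i}" using \<open>k \<in> ?K\<close> by auto
    have "\<forall>\<^sub>F \<epsilon> in at_right 0. \<forall>\<^sub>F x in nhds xb.
            hs_term_eps \<epsilon> (psi i j) (phi i j x) (vphi i j x) = hs_term (psi i j) (phi i j x) (vphi i j x)"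
      using assms k
      by (intro eventually_hs_term_eps_eq_nhds)
        (auto simp: local_sign_invariance_def J_plus0_def J_minus0_def eventually_nhds)
    then show ?thesis using k(1) by simp
  qed
  then have "\<forall>\<^sub>F \<epsilon> in at_right 0. \<forall>k\<in>?K. \<forall>\<^sub>F x in nhds xb. ?eq \<epsilon> x k"
    by (intro eventually_ball_finite) auto
  then have "\<forall>\<^sub>F \<epsilon> in at_right 0. \<forall>\<^sub>F x in nhds xb. \<forall>k\<in>?K. ?eq \<epsilon> x k"
    by eventually_elim (intro eventually_ball_finite, auto)
  then show ?thesis
    unfolding hs_sum_eps_def hs_sum_def
    by eventually_elim (auto elim!: eventually_mono intro: sum.cong)
qed

theorem proposition8:
  fixes P :: "(real^'n) set" and c :: "real^'n \<Rightarrow> real"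
    and I :: nat and A :: "nat \<Rightarrow> real^'n" and eta :: "nat \<Rightarrow> real"
    and J :: "nat \<Rightarrow> nat" and psi :: "nat \<Rightarrow> nat \<Rightarrow> real"
    and phi vphi :: "nat \<Rightarrow> nat \<Rightarrow> real^'n \<Rightarrow> real" and xb :: "real^'n"
  assumes "closed P" and "convex P"
    and "\<And>i j. i \<le> I \<Longrightarrow> j \<in> {1..J i} \<Longrightarrow> continuous_on UNIV (phi i j)"
    and "\<And>i j. i \<le> I \<Longrightarrow> j \<in> {1..J i} \<Longrightarrow> continuous_on UNIV (vphi i j)"
    and "xb \<in> P"
  shows "\<exists>\<epsilon>b>0. \<forall>\<epsilon>. 0 < \<epsilon> \<and> \<epsilon> \<le> \<epsilon>b \<longrightarrow>
     (local_maximizer (theta_MHS c J psi phi vphi) (X_MHS P I A eta J psi phi vphi) xb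
        \<longrightarrow> local_maximizer (theta_MHS_eps \<epsilon> c J psi phi vphi) (X_MHS_eps \<epsilon> P I A eta J psi phi vphi) xb)
   \<and> (local_sign_invariance I J psi phi vphi xb
        \<and> local_maximizer (theta_MHS_eps \<epsilon> c J psi phi vphi) (X_MHS_eps \<epsilon> P I A eta J psi phi vphi) xb
        \<longrightarrow> local_maximizer (theta_MHS c J psi phi vphi) (X_MHS P I A eta J psi phi vphi) xb)"
proof (rule eventually_at_right_0_bound)
  let ?LSI = "local_sign_invariance I J psi phi vphi xb"
  have cont: "isCont (phi i j) xb" "isCont (vphi i j) xb" if "i \<le> I" "j \<in> {1..J i}" for i j
    using assms(3,4)[OF that] by (simp_all add: continuous_on_eq_continuous_at)
  have near_xb: "\<forall>\<^sub>F \<epsilon> in at_right 0. ?LSI \<longrightarrow>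
      (\<forall>\<^sub>F x in nhds xb. \<forall>i\<le>I. hs_sum_eps \<epsilon> J psi phi vphi i x = hs_sum J psi phi vphi i x)"
    using eventually_hs_sums_eps_eq_nhds[OF cont] by (cases ?LSI) simp_all
  show "\<forall>\<^sub>F \<epsilon> in at_right 0.
     (local_maximizer (theta_MHS c J psi phi vphi) (X_MHS P I A eta J psi phi vphi) xb
        \<longrightarrow> local_maximizer (theta_MHS_eps \<epsilon> c J psi phi vphi) (X_MHS_eps \<epsilon> P I A eta J psi phi vphi) xb)
   \<and> (?LSI \<and> local_maximizer (theta_MHS_eps \<epsilon> c J psi phi vphi) (X_MHS_eps \<epsilon> P I A eta J psi phi vphi) xb
        \<longrightarrow> local_maximizer (theta_MHS c J psi phi vphi) (X_MHS P I A eta J psi phi vphi) xb)"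
    using eventually_at_right_less[of 0] eventually_hs_sums_eps_eq[of I J psi phi vphi xb] near_xb
    by eventually_elim
      (blast intro: local_maximizer_MHS_eps_if_hs_sums_eq local_maximizer_MHS_if_hs_sums_eq_nhds)
qed

end
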